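(* Let $\pi\colon E\to M$ be endowed with a symmetric $n$-fold vector bundle atlas $\{(U_\alpha,\Theta_\alpha,(V^{\#I})_{\emptyset\ne I\subseteq\underline n})\}_{\alpha\in\Lambda}$. For $\sigma\in S_n$ and $\alpha\in\Lambda$ define $\Phi^\alpha_\sigma\colon U_\alpha\times\prod_{\emptyset\neq I\subseteq\underline n}V^{\#I}\to U_\alpha\times\prod_{\emptyset\neq I\subseteq\underline n}V^{\#I}$ by $\Phi^\alpha_\sigma(p,(v_I)_I)=(p,(\epsilon(\sigma^{-1},I)v_{\sigma^{-1}(I)})_I)$. Then the maps $\Theta_\alpha^{-1}\circ\Phi^\alpha_\sigma\circ\Theta_\alpha$ agree on overlaps and define a global map $\Phi_\sigma\colon E\to E$, and $\sigma\mapsto\Phi_\sigma$ is a left action of $S_n$ on $E$.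
   Context: $\epsilon(\sigma,I)=(-1)^{\#\{(a,b)\in I^2:a<b,\sigma(a)>\sigma(b)\}}$. An $n$-fold vector bundle chart on a topological space $E$ with continuous $\pi\colon E\to M$ ($M$ a smooth manifold) is $(U,\Theta,(V_I)_{\emptyset\ne I\subseteq\underline n})$ with $U\subseteq M$ open, $V_I$ finite-dimensional real vector spaces, and $\Theta\colon\pi^{-1}(U)\to U\times\prod_I V_I$ a homeomorphism with $\pi=\mathrm{pr}_1\circ\Theta$. Two charts are smoothly compatible if $\Theta'\circ\Theta^{-1}$ has the form $(p,(v_I)_I)\mapsto(p,(\sum_{\rho=(I_1,\ldots,I_k)\in\mathcal P(I)}\omega_\rho(p)(v_{I_1},\ldots,v_{I_k}))_I)$ with $\omega_\rho\in C^\infty(U\cap U',\mathrm{Hom}(V_{I_1}\otimes\cdots\otimes V_{I_k},V_I))$; an atlas is a family of pairwise compatible charts covering $M$. $\mathcal P(I)$: partitions of $I$ in canonical order (increasing cardinality, ties lexicographic). The atlas is symmetric if (1) $V_I=V^{\#I}$ depends only on $\#I$; (2) for all $\alpha,\beta$ and partitions $\rho_1\in\mathcal P(I)$, $\rho_2\in\mathcal P(J)$ with $\#I=\#J$ and equal sizes $(\#$blocks in order$)$, $\mathrm{sgn}(\rho_1)\omega^{\rho_1}_{\alpha\beta}=\mathrm{sgn}(\rho_2)\omega^{\rho_2}_{\alpha\beta}$ (so the change of chart is $(p,(v_I))\mapsto(p,(\sum_{\rho\in\mathcal P(I)}\mathrm{sgn}(\rho)\,\omega^{\#I_1,\ldots,\#I_k}_{\alpha\beta}(p)(v_{I_1},\ldots,v_{I_k}))_I)$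 with $\omega^{l_1,\ldots,l_k}_{\alpha\beta}$ the common value for the canonical partition); (3) each $\omega^{l_1,\ldots,l_k}_{\alpha\beta}(p)$ is symmetric in arguments from $V^j$ for $j$ even and alternating for $j$ odd. Here $\mathrm{sgn}(\rho)$ for an ordered partition $(I_1,\ldots,I_k)$ of $I$ is the sign of the permutation of $I$ from its natural order to the order obtained by listing $I_1$ increasingly, then $I_2$, etc. *)

theory Defs
  imports "HOL-Analysis.Analysis" "HOL-Combinatorics.Permutations"
begin

definition Idx :: "nat \<Rightarrow> nat set set" where
  "Idx n = {I. I \<noteq> {} \<and> I \<subseteq> {1..n}}"

definition perm_eps :: "(nat \<Rightarrow> nat) \<Rightarrow> nat set \<Rightarrow> real" where
  "perm_eps \<sigma> I = (-1) ^ card {(a, b). a \<in> I \<and> b \<in> I \<and> a < b \<and> \<sigma> a > \<sigma> b}"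

definition inv_count :: "nat list \<Rightarrow> nat" where
  "inv_count xs = card {(i, j). i < j \<and> j < length xs \<and> xs ! j < xs ! i}"

text \<open>sgn of an ordered partition: sign of the permutation from the natural order of I
  to the order obtained by listing the blocks increasingly one after another.\<close>
definition part_sgn :: "nat set list \<Rightarrow> real" where
  "part_sgn \<rho> = (-1) ^ inv_count (concat (map sorted_list_of_set \<rho>))"

definition block_less :: "nat set \<Rightarrow> nat set \<Rightarrow> bool" where
  "block_less A B \<longleftrightarrow> card A < card B \<or>
     (card A = card B \<and> (sorted_list_of_set A, sorted_list_of_set B) \<in> lexord {(x, y). x < y})"

definition canon_partitions :: "nat set \<Rightarrow> nat set list set" where
  "canon_partitions I = {\<rho>. (\<forall>B\<in>set \<rho>. B \<noteq> {}) \<and> \<Union>(set \<rho>) = I \<and>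
      (\<forall>i<length \<rho>. \<forall>j<length \<rho>. i \<noteq> j \<longrightarrow> \<rho> ! i \<inter> \<rho> ! j = {}) \<and>
      sorted_wrt block_less \<rho>}"

definition multilinear_into :: "'v::real_vector set list \<Rightarrow> 'v set \<Rightarrow> ('v list \<Rightarrow> 'v) \<Rightarrow> bool" where
  "multilinear_into Vs W f \<longleftrightarrow>
     (\<forall>xs. length xs = length Vs \<and> (\<forall>j<length Vs. xs ! j \<in> Vs ! j) \<longrightarrow>
        f xs \<in> W \<and>
        (\<forall>i<length Vs. \<forall>x\<in>Vs ! i. \<forall>y\<in>Vs ! i. \<forall>a b.
           f (xs[i := a *\<^sub>R x + b *\<^sub>R y]) = a *\<^sub>R f (xs[i := x]) + b *\<^sub>R f (xs[i := y])))"

text \<open>Symmetric in arguments from V^j for j even, alternating for j odd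
  (ls = list of the sizes of the argument slots).\<close>
definition sym_alt :: "(nat \<Rightarrow> 'v::real_vector set) \<Rightarrow> nat list \<Rightarrow> ('v list \<Rightarrow> 'v) \<Rightarrow> bool" where
  "sym_alt V ls f \<longleftrightarrow>
     (\<forall>xs i j. length xs = length ls \<and> (\<forall>k<length ls. xs ! k \<in> V (ls ! k)) \<and>
        i < j \<and> j < length ls \<and> ls ! i = ls ! j \<longrightarrow>
        (if even (ls ! i) then f (xs[i := xs ! j, j := xs ! i]) = f xs
         else (xs ! i = xs ! j \<longrightarrow> f xs = 0)))"

definition chart_domain :: "'e topology \<Rightarrow> ('e \<Rightarrow> 'm) \<Rightarrow> 'm set \<Rightarrow> 'e set" where
  "chart_domain E \<pi> U = {e \<in> topspace E. \<pi> e \<in> U}"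

definition fiber_top :: "nat \<Rightarrow> (nat \<Rightarrow> 'v::real_normed_vector set) \<Rightarrow> (nat set \<Rightarrow> 'v) topology" where
  "fiber_top n V = product_topology (\<lambda>I. subtopology euclidean (V (card I))) (Idx n)"

definition nfold_chart ::
  "nat \<Rightarrow> 'm topology \<Rightarrow> 'e topology \<Rightarrow> ('e \<Rightarrow> 'm) \<Rightarrow> (nat \<Rightarrow> 'v::real_normed_vector set)
   \<Rightarrow> 'm set \<Rightarrow> ('e \<Rightarrow> 'm \<times> (nat set \<Rightarrow> 'v)) \<Rightarrow> bool" where
  "nfold_chart n M E \<pi> V U \<Theta> \<longleftrightarrow> openin M U \<and>
     homeomorphic_map (subtopology E (chart_domain E \<pi> U))
        (prod_topology (subtopology M U) (fiber_top n V)) \<Theta> \<and>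
     (\<forall>e\<in>chart_domain E \<pi> U. fst (\<Theta> e) = \<pi> e)"

text \<open>Coefficient family omega_rho (indexed by partitions rho) witnessing that the
  change of chart Theta' o Theta^{-1} has the required form, with smoothness rendered
  as continuity in p.\<close>
definition chart_transition ::
  "nat \<Rightarrow> 'm topology \<Rightarrow> 'e topology \<Rightarrow> ('e \<Rightarrow> 'm) \<Rightarrow> (nat \<Rightarrow> 'v::real_normed_vector set)
   \<Rightarrow> 'm set \<Rightarrow> ('e \<Rightarrow> 'm \<times> (nat set \<Rightarrow> 'v)) \<Rightarrow> 'm set \<Rightarrow> ('e \<Rightarrow> 'm \<times> (nat set \<Rightarrow> 'v))
   \<Rightarrow> ('m \<Rightarrow> nat set list \<Rightarrow> 'v list \<Rightarrow> 'v) \<Rightarrow> bool" where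
  "chart_transition n M E \<pi> V U \<Theta> U' \<Theta>' \<omega> \<longleftrightarrow>
     (\<forall>I\<in>Idx n. \<forall>\<rho>\<in>canon_partitions I.
        (\<forall>p\<in>U \<inter> U'. multilinear_into (map (\<lambda>B. V (card B)) \<rho>) (V (card I)) (\<omega> p \<rho>)) \<and>
        (\<forall>args. continuous_map (subtopology M (U \<inter> U')) euclidean (\<lambda>p. \<omega> p \<rho> args))) \<and>
     (\<forall>e\<in>chart_domain E \<pi> (U \<inter> U').
        \<Theta>' e = (\<pi> e, \<lambda>I\<in>Idx n. \<Sum>\<rho>\<in>canon_partitions I. \<omega> (\<pi> e) \<rho> (map (snd (\<Theta> e)) \<rho>)))"

text \<open>Symmetric n-fold vector bundle atlas: V_I = V^{#I}; charts cover M; every change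
  of charts has the above form with coefficients satisfying conditions (2) and (3).\<close>
definition symmetric_nfold_atlas ::
  "nat \<Rightarrow> 'm topology \<Rightarrow> 'e topology \<Rightarrow> ('e \<Rightarrow> 'm) \<Rightarrow> (nat \<Rightarrow> 'v::euclidean_space set)
   \<Rightarrow> 'a set \<Rightarrow> ('a \<Rightarrow> 'm set) \<Rightarrow> ('a \<Rightarrow> 'e \<Rightarrow> 'm \<times> (nat set \<Rightarrow> 'v)) \<Rightarrow> bool" where
  "symmetric_nfold_atlas n M E \<pi> V \<Lambda> U \<Theta> \<longleftrightarrow>
     continuous_map E M \<pi> \<and>
     (\<forall>k. subspace (V k)) \<and>
     (\<forall>\<alpha>\<in>\<Lambda>. nfold_chart n M E \<pi> V (U \<alpha>) (\<Theta> \<alpha>)) \<and>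
     topspace M \<subseteq> (\<Union>\<alpha>\<in>\<Lambda>. U \<alpha>) \<and>
     (\<forall>\<alpha>\<in>\<Lambda>. \<forall>\<beta>\<in>\<Lambda>. \<exists>\<omega>.
        chart_transition n M E \<pi> V (U \<alpha>) (\<Theta> \<alpha>) (U \<beta>) (\<Theta> \<beta>) \<omega> \<and>
        (\<forall>I\<in>Idx n. \<forall>J\<in>Idx n. \<forall>\<rho>1\<in>canon_partitions I. \<forall>\<rho>2\<in>canon_partitions J.
           map card \<rho>1 = map card \<rho>2 \<longrightarrow>
           (\<forall>p\<in>U \<alpha> \<inter> U \<beta>. \<forall>args. part_sgn \<rho>1 *\<^sub>R \<omega> p \<rho>1 args = part_sgn \<rho>2 *\<^sub>R \<omega> p \<rho>2 args)) \<and>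
        (\<forall>I\<in>Idx n. \<forall>\<rho>\<in>canon_partitions I. \<forall>p\<in>U \<alpha> \<inter> U \<beta>.
           sym_alt V (map card \<rho>) (\<lambda>args. part_sgn \<rho> *\<^sub>R \<omega> p \<rho> args)))"

definition local_perm :: "nat \<Rightarrow> (nat \<Rightarrow> nat) \<Rightarrow> 'm \<times> (nat set \<Rightarrow> 'v::real_vector) \<Rightarrow> 'm \<times> (nat set \<Rightarrow> 'v)" where
  "local_perm n \<sigma> x = (fst x, \<lambda>I\<in>Idx n. perm_eps (inv \<sigma>) I *\<^sub>R snd x (inv \<sigma> ` I))"

end

theory Submission
  imports Defs
begin

(*
  In a chart, \<Phi>_\<sigma> acts on the fibre by v \<mapsto> (\<lambda>I. \<epsilon>(inv \<sigma>, I) v (inv \<sigma> ` I)). The sign is a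
  cocycle, \<epsilon>(h \<circ> k, I) = \<epsilon>(k, I) \<epsilon>(h, k ` I) (both sides count inversions modulo 2), so these
  local maps form an action, and everything reduces to showing that they commute with the
  changes of chart; compatible local actions then glue to a global one.

  Apply the fibre action to a term \<omega>_\<rho> (v I_1, ..., v I_k) of a chart transition. Multilinearity
  pulls out \<Prod>_j \<epsilon>(inv \<sigma>, I_j), and the blocks inv \<sigma> ` I_j form a partition of inv \<sigma> ` I which,
  sorted into canonical order \<rho>', indexes a term of the transition at inv \<sigma> ` I. Sorting costs
  the sign of the reordering through the (anti)symmetry of the coefficients (condition 3),
  condition 2 trades \<omega>_\<rho> for \<omega>_\<rho>', and the inversion count identity
  sgn(inv \<sigma> ` \<rho>) \<Prod>_j \<epsilon>(inv \<sigma>, I_j) = sgn(\<rho>) \<epsilon>(inv \<sigma>, I) collapses all signs to \<epsilon>(inv \<sigma>, I).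
  Sorting is a bijection between the partitions of I and of inv \<sigma> ` I, so the sums agree.
*)

section \<open>Inversion counts\<close>

lemma neg_one_power_eq_if_even_add: "even (a + b) \<Longrightarrow> (-1::real) ^ a = (-1) ^ b"
  by (metis even_add neg_one_even_power neg_one_odd_power)

lemma card_add_card_eq_sym_diff:
  assumes "finite A" "finite B"
  shows "card A + card B = card (A - B) + card (B - A) + 2 * card (A \<inter> B)"
  using card_Int_Diff[OF assms(1), of B] card_Int_Diff[OF assms(2), of A] by (simp add: Int_commute)

fun inversions :: "nat list \<Rightarrow> nat" where
  "inversions [] = 0"
| "inversions (x # xs) = length (filter (\<lambda>y. y < x) xs) + inversions xs"

definition cross_inversions :: "nat list \<Rightarrow> nat list \<Rightarrow> nat" where
  "cross_inversions xs ys = sum_list (map (\<lambda>x. length (filter (\<lambda>y. y < x) ys)) xs)"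

lemma inversions_append:
  "inversions (xs @ ys) = inversions xs + inversions ys + cross_inversions xs ys"
  by (induction xs) (auto simp: cross_inversions_def)

lemma cross_inversions_append_left:
  "cross_inversions (xs @ xs') ys = cross_inversions xs ys + cross_inversions xs' ys"
  by (simp add: cross_inversions_def)

lemma cross_inversions_append_right:
  "cross_inversions xs (ys @ ys') = cross_inversions xs ys + cross_inversions xs ys'"
  by (simp add: cross_inversions_def sum_list_addf)

lemma cross_inversions_mset_cong:
  assumes "mset xs = mset xs'" "mset ys = mset ys'"
  shows "cross_inversions xs ys = cross_inversions xs' ys'"
proof -
  have "cross_inversions xs ys = (\<Sum>x\<in>#mset xs. size (filter_mset (\<lambda>y. y < x) (mset ys)))" for xs ys
    by (induction xs) (auto simp: cross_inversions_def simp flip: mset_filter)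
  then show ?thesis using assms by simp
qed

lemma cross_inversions_add_swap:
  "set xs \<inter> set ys = {} \<Longrightarrow>
   cross_inversions xs ys + cross_inversions ys xs = length xs * length ys"
proof (induction xs)
  case Nil
  then show ?case by (simp add: cross_inversions_def)
next
  case (Cons x xs)
  then have "x \<notin> set ys" by auto
  then have "filter (\<lambda>y. \<not> y < x) ys = filter ((<) x) ys"
    by (intro filter_cong) (auto simp: not_less le_less)
  moreover have "cross_inversions ys [x] = length (filter ((<) x) ys)"
    by (induction ys) (auto simp: cross_inversions_def)
  ultimately have "length (filter (\<lambda>y. y < x) ys) + cross_inversions ys [x] = length ys"
    using sum_length_filter_compl[of "\<lambda>y. y < x" ys] by simp
  with Cons show ?case
    using cross_inversions_append_right[of ys "[x]" xs]
    by (simp add: cross_inversions_def)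
qed

lemma inversions_sorted: "sorted xs \<Longrightarrow> inversions xs = 0"
  by (induction xs) (auto simp: filter_empty_conv)

lemma inv_count_eq_inversions: "inv_count xs = inversions xs"
proof (induction xs)
  case Nil
  then show ?case by (simp add: inv_count_def)
next
  case (Cons x xs)
  let ?N = "{j. j < length xs \<and> xs ! j < x}"
  let ?O = "{(i, j). i < j \<and> j < length xs \<and> xs ! j < xs ! i}"
  have split: "{(i, j). i < j \<and> j < length (x # xs) \<and> (x # xs) ! j < (x # xs) ! i}
      = (\<lambda>j. (0, Suc j)) ` ?N \<union> map_prod Suc Suc ` ?O"
  proof (intro set_eqI iffI)
    fix p assume "p \<in> {(i, j). i < j \<and> j < length (x # xs) \<and> (x # xs) ! j < (x # xs) ! i}"
    then obtain i j where p: "p = (i, j)" "i < j" "j < length (x # xs)" "(x # xs) ! j < (x # xs) ! i"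
      by auto
    moreover obtain j' where "j = Suc j'" using p(2) by (cases j) auto
    ultimately show "p \<in> (\<lambda>j. (0, Suc j)) ` ?N \<union> map_prod Suc Suc ` ?O"
      by (cases i) force+
  qed auto
  have "finite ?O"
    by (rule finite_subset[of _ "{..<length xs} \<times> {..<length xs}"]) auto
  then have "inv_count (x # xs) = card ?N + card ?O"
    unfolding inv_count_def split
    by (subst card_Un_disjoint) (auto simp: card_image inj_on_def)
  with Cons show ?case by (simp add: inv_count_def length_filter_conv_card)
qed

definition inversions_on :: "(nat \<Rightarrow> nat) \<Rightarrow> nat set \<Rightarrow> nat" where
  "inversions_on g S = card {(a, b). a \<in> S \<and> b \<in> S \<and> a < b \<and> g a > g b}"

lemma perm_eps_eq: "perm_eps g I = (-1) ^ inversions_on g I"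
  by (simp add: perm_eps_def inversions_on_def)

lemma inversions_on_insert:
  assumes "finite S" "x \<notin> S"
  shows "inversions_on g (insert x S) = inversions_on g S
    + card {b\<in>S. x < b \<and> g b < g x} + card {a\<in>S. a < x \<and> g x < g a}"
proof -
  let ?P = "{(a, b). a \<in> S \<and> b \<in> S \<and> a < b \<and> g a > g b}"
  have split: "{(a, b). a \<in> insert x S \<and> b \<in> insert x S \<and> a < b \<and> g a > g b}
      = (?P \<union> Pair x ` {b\<in>S. x < b \<and> g b < g x}) \<union> (\<lambda>a. (a, x)) ` {a\<in>S. a < x \<and> g x < g a}"
    by auto
  have "finite ?P" by (rule finite_subset[of _ "S \<times> S"]) (use assms in auto)
  with assms show ?thesis
    unfolding inversions_on_def split
    by (subst card_Un_disjoint, auto)+ (auto simp: card_image inj_on_def)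
qed

lemma even_inversions_map:
  "distinct xs \<Longrightarrow> inj_on g (set xs) \<Longrightarrow>
   even (inversions (map g xs) + inversions xs + inversions_on g (set xs))"
proof (induction xs)
  case Nil
  then show ?case by (simp add: inversions_on_def)
next
  case (Cons x xs)
  let ?S = "set xs"
  let ?A = "{b\<in>?S. g b < g x}" and ?B = "{b\<in>?S. b < x}"
  have x: "x \<notin> ?S" and g: "\<And>b. b \<in> ?S \<Longrightarrow> g b \<noteq> g x"
    using Cons.prems by (auto simp: inj_on_def)
  \<comment> \<open>the pairs through x counted by the three terms are ?A, ?B and their symmetric difference\<close>
  have "?A - ?B = {b\<in>?S. x < b \<and> g b < g x}" "?B - ?A = {a\<in>?S. a < x \<and> g x < g a}"
    using x g by (auto simp: not_less_iff_gr_or_eq)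
  moreover have "length (filter (\<lambda>y. y < g x) (map g xs)) = card ?A"
    "length (filter (\<lambda>y. y < x) xs) = card ?B"
    using Cons.prems by (simp_all add: filter_map distinct_length_filter Int_def conj_commute)
  ultimately show ?case
    using Cons card_add_card_eq_sym_diff[of ?A ?B] inversions_on_insert[of ?S x g]
    by (simp add: algebra_simps)
qed

lemma perm_eps_comp:
  assumes "finite I" "inj_on k I" "inj_on h (k ` I)"
  shows "perm_eps (h \<circ> k) I = perm_eps k I * perm_eps h (k ` I)"
proof -
  let ?L = "sorted_list_of_set I"
  have L: "distinct ?L" "set ?L = I" using assms by auto
  have "even (inversions (map h (map k ?L)) + inversions ?L + inversions_on (h \<circ> k) I)"
    using even_inversions_map[of ?L "h \<circ> k"] L assms by (simp add: comp_inj_on)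
  moreover have "even (inversions (map h (map k ?L)) + inversions (map k ?L) + inversions_on h (k ` I))"
    using even_inversions_map[of "map k ?L" h] L assms by (simp add: distinct_map)
  moreover have "even (inversions (map k ?L) + inversions ?L + inversions_on k I)"
    using even_inversions_map[of ?L k] L assms by simp
  ultimately have "even (inversions_on (h \<circ> k) I + (inversions_on k I + inversions_on h (k ` I)))"
    by (auto simp: even_add)
  then show ?thesis
    unfolding perm_eps_eq power_add[symmetric] by (rule neg_one_power_eq_if_even_add)
qed

lemma perm_eps_eq_inversions_map:
  assumes "finite B" "inj_on g B"
  shows "perm_eps g B = (-1) ^ inversions (map g (sorted_list_of_set B))"
proof -
  have "even (inversions (map g (sorted_list_of_set B)) + inversions_on g B)"
    using even_inversions_map[of "sorted_list_of_set B" g] assms by (simp add: inversions_sorted)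
  then show ?thesis
    unfolding perm_eps_eq by (rule neg_one_power_eq_if_even_add[symmetric])
qed

lemma perm_eps_id: "perm_eps id I = 1"
proof -
  have "{(a, b). a \<in> I \<and> b \<in> I \<and> a < b \<and> id a > id b} = {}" by auto
  then show ?thesis unfolding perm_eps_def by (metis card.empty power_0)
qed

section \<open>Signs of ordered partitions\<close>

definition block_concat :: "nat set list \<Rightarrow> nat list" where
  "block_concat \<rho> = concat (map sorted_list_of_set \<rho>)"

lemma part_sgn_eq: "part_sgn \<rho> = (-1) ^ inversions (block_concat \<rho>)"
  by (simp add: part_sgn_def block_concat_def inv_count_eq_inversions)

lemma part_sgn_mult_self: "part_sgn \<rho> * part_sgn \<rho> = 1"
  by (simp add: part_sgn_def flip: power_add)

definition disjoint_blocks :: "nat set list \<Rightarrow> bool" where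
  "disjoint_blocks \<rho> \<longleftrightarrow> distinct \<rho> \<and> disjoint (set \<rho>) \<and> (\<forall>B\<in>set \<rho>. finite B)"

lemma block_concat_simps [simp]:
  "block_concat [] = []"
  "block_concat (A # \<rho>) = sorted_list_of_set A @ block_concat \<rho>"
  "block_concat (\<rho> @ \<rho>') = block_concat \<rho> @ block_concat \<rho>'"
  by (simp_all add: block_concat_def)

lemma set_block_concat: "\<forall>B\<in>set \<rho>. finite B \<Longrightarrow> set (block_concat \<rho>) = \<Union>(set \<rho>)"
  by (auto simp: block_concat_def)

lemma distinct_block_concat: "disjoint_blocks \<rho> \<Longrightarrow> distinct (block_concat \<rho>)"
proof (induction \<rho>)
  case Nil
  then show ?case by simp
next
  case (Cons A \<rho>)
  then have "disjoint_blocks \<rho>" by (auto simp: disjoint_blocks_def disjoint_def)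
  with Cons show ?case
    by (auto simp: disjoint_blocks_def disjoint_def set_block_concat)
qed

lemma disjoint_blocks_image:
  assumes "disjoint_blocks \<rho>" "inj g"
  shows "disjoint_blocks (map ((`) g) \<rho>)"
proof -
  have "inj_on ((`) g) (set \<rho>)"
    using assms(2) by (simp add: inj_on_def inj_image_eq_iff)
  moreover have "g ` A \<inter> g ` B = {}" if "A \<in> set \<rho>" "B \<in> set \<rho>" "g ` A \<noteq> g ` B" for A B
  proof -
    have "A \<noteq> B" using that(3) by blast
    then have "A \<inter> B = {}" using assms(1) that(1,2) unfolding disjoint_blocks_def disjoint_def by blast
    then show ?thesis by (simp add: image_Int[OF assms(2), symmetric])
  qed
  ultimately show ?thesis
    using assms(1) by (auto simp: disjoint_blocks_def distinct_map disjoint_def)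
qed

lemma even_inversions_swap:
  assumes "set a \<inter> set c = {}" "set a \<inter> set b = {}" "set c \<inter> set b = {}" "length a = length b"
  shows "even (inversions (p @ a @ c @ b @ q) + inversions (p @ b @ c @ a @ q) + length a)"
proof -
  have ac: "cross_inversions a c + cross_inversions c a = length a * length c"
    and ab: "cross_inversions a b + cross_inversions b a = length a * length b"
    and cb: "cross_inversions c b + cross_inversions b c = length c * length b"
    using cross_inversions_add_swap assms by (auto simp: Int_commute)
  \<comment> \<open>all other cross terms occur in both sums\<close>
  have "inversions (p @ a @ c @ b @ q) + inversions (p @ b @ c @ a @ q)
     = 2 * (inversions p + inversions a + inversions b + inversions c + inversions q
         + cross_inversions p a + cross_inversions p b + cross_inversions p c + cross_inversions p q
         + cross_inversions a q + cross_inversions b q + cross_inversions c q)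
       + (cross_inversions a c + cross_inversions c a) + (cross_inversions a b + cross_inversions b a)
       + (cross_inversions c b + cross_inversions b c)"
    by (simp add: inversions_append cross_inversions_append_left cross_inversions_append_right)
  then show ?thesis unfolding ac ab cb using assms(4) by simp
qed

lemma part_sgn_swap:
  assumes "disjoint_blocks (P @ A # C @ B # Q)" "card A = card B"
  shows "part_sgn (P @ A # C @ B # Q) = (-1) ^ card A * part_sgn (P @ B # C @ A # Q)"
proof -
  have "distinct (P @ A # C @ B # Q)" "disjoint (set (P @ A # C @ B # Q))"
    and fin: "finite A" "finite B" "\<forall>X\<in>set C. finite X"
    using assms(1) by (simp_all add: disjoint_blocks_def)
  then have "A \<inter> \<Union>(set C) = {}" "A \<inter> B = {}" "\<Union>(set C) \<inter> B = {}"
    unfolding disjoint_def by fastforce+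
  with fin have "even (inversions (block_concat P @ sorted_list_of_set A @ block_concat C
        @ sorted_list_of_set B @ block_concat Q)
      + inversions (block_concat P @ sorted_list_of_set B @ block_concat C
        @ sorted_list_of_set A @ block_concat Q) + length (sorted_list_of_set A))"
    by (intro even_inversions_swap) (use assms(2) set_block_concat[of C] in auto)
  then have "even (inversions (block_concat (P @ A # C @ B # Q))
      + (card A + inversions (block_concat (P @ B # C @ A # Q))))"
    by (simp add: ac_simps)
  then show ?thesis
    unfolding part_sgn_eq power_add[symmetric] by (rule neg_one_power_eq_if_even_add)
qed

lemma inversions_concat_mset_cong:
  assumes "\<And>B. B \<in> set xs \<Longrightarrow> mset (f B) = mset (h B)"
  shows "inversions (concat (map f xs)) + sum_list (map (\<lambda>B. inversions (h B)) xs)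
       = inversions (concat (map h xs)) + sum_list (map (\<lambda>B. inversions (f B)) xs)"
  using assms
proof (induction xs)
  case Nil
  then show ?case by simp
next
  case (Cons x xs)
  have "mset (concat (map f xs)) = mset (concat (map h xs))"
    using Cons.prems by (induction xs) auto
  then have "cross_inversions (f x) (concat (map f xs)) = cross_inversions (h x) (concat (map h xs))"
    using Cons.prems by (intro cross_inversions_mset_cong) auto
  with Cons show ?case by (simp add: inversions_append)
qed

lemma part_sgn_image:
  assumes \<rho>: "disjoint_blocks \<rho>" and g: "inj_on g (\<Union>(set \<rho>))"
  shows "part_sgn (map ((`) g) \<rho>) * prod_list (map (perm_eps g) \<rho>)
       = part_sgn \<rho> * perm_eps g (\<Union>(set \<rho>))"
proof -
  let ?f = "\<lambda>B. map g (sorted_list_of_set B)" and ?h = "\<lambda>B. sorted_list_of_set (g ` B)"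
  let ?s = "sum_list (map (\<lambda>B. inversions (?f B)) \<rho>)"
  have fin: "\<And>B. B \<in> set \<rho> \<Longrightarrow> finite B" and inj: "\<And>B. B \<in> set \<rho> \<Longrightarrow> inj_on g B"
    using assms by (auto simp: disjoint_blocks_def intro: inj_on_subset)
  have "mset (?f B) = mset (?h B)" if "B \<in> set \<rho>" for B
    using fin[OF that] inj[OF that]
    by (metis distinct_map distinct_sorted_list_of_set finite_imageI mset_set_set set_map
        set_sorted_list_of_set)
  then have "inversions (concat (map ?f \<rho>))
      = inversions (block_concat (map ((`) g) \<rho>)) + ?s"
    using inversions_concat_mset_cong[of \<rho> ?f ?h]
    by (simp add: block_concat_def o_def inversions_sorted)
  moreover have "map g (block_concat \<rho>) = concat (map ?f \<rho>)"
    by (simp add: block_concat_def map_concat o_def)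
  moreover have "even (inversions (map g (block_concat \<rho>)) + inversions (block_concat \<rho>)
      + inversions_on g (\<Union>(set \<rho>)))"
    using even_inversions_map[of "block_concat \<rho>" g] distinct_block_concat[OF \<rho>] g
    by (simp add: set_block_concat fin)
  ultimately have "even (inversions (block_concat (map ((`) g) \<rho>)) + ?s
      + (inversions (block_concat \<rho>) + inversions_on g (\<Union>(set \<rho>))))"
    by (simp add: ac_simps)
  moreover have "prod_list (map (perm_eps g) \<rho>) = (-1) ^ ?s"
  proof -
    have "map (perm_eps g) \<rho> = map (\<lambda>B. (-1) ^ inversions (?f B)) \<rho>"
      using fin inj by (simp add: perm_eps_eq_inversions_map)
    then show ?thesis by (simp del: map_eq_conv) (induction \<rho>; simp add: power_add)
  qed
  ultimately show ?thesis
    unfolding part_sgn_eq perm_eps_eq[of g "\<Union>(set \<rho>)"]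
    by (simp only: power_add[symmetric]) (erule neg_one_power_eq_if_even_add)
qed

section \<open>Multilinear maps with symmetries\<close>

lemma multilinear_intoD:
  assumes "multilinear_into Vs W F" "length xs = length Vs" "\<forall>j<length Vs. xs ! j \<in> Vs ! j"
    "i < length Vs" "x \<in> Vs ! i" "y \<in> Vs ! i"
  shows "F (xs[i := a *\<^sub>R x + b *\<^sub>R y]) = a *\<^sub>R F (xs[i := x]) + b *\<^sub>R F (xs[i := y])"
  using assms unfolding multilinear_into_def by blast

lemma multilinear_into_scaleR:
  assumes "multilinear_into Vs W F" "\<And>x. x \<in> W \<Longrightarrow> c *\<^sub>R x \<in> W"
  shows "multilinear_into Vs W (\<lambda>xs. c *\<^sub>R F xs)"
  using assms unfolding multilinear_into_def by (simp add: scaleR_add_right mult.commute)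

lemma multilinear_into_scale_arg:
  assumes "multilinear_into Vs W F" "length xs = length Vs" "\<forall>j<length Vs. xs ! j \<in> Vs ! j"
    "i < length Vs"
  shows "F (xs[i := c *\<^sub>R xs ! i]) = c *\<^sub>R F xs"
  using multilinear_intoD[OF assms, of "xs ! i" "xs ! i" c 0] assms by simp

lemma multilinear_into_scale_args:
  assumes F: "multilinear_into Vs W F"
    and closed: "\<And>k c x. k < length Vs \<Longrightarrow> x \<in> Vs ! k \<Longrightarrow> c *\<^sub>R x \<in> Vs ! k"
    and xs: "length xs = length Vs" "\<forall>k<length Vs. xs ! k \<in> Vs ! k"
  shows "F (map (\<lambda>k. c k *\<^sub>R xs ! k) [0..<length Vs]) = (\<Prod>k<length Vs. c k) *\<^sub>R F xs"
proof -
  let ?ys = "\<lambda>m. map (\<lambda>k. if k < m then c k *\<^sub>R xs ! k else xs ! k) [0..<length Vs]"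
  have "F (?ys m) = (\<Prod>k<m. c k) *\<^sub>R F xs" if "m \<le> length Vs" for m
    using that
  proof (induction m)
    case 0
    have "?ys 0 = xs" using xs by (intro nth_equalityI) auto
    then show ?case by simp
  next
    case (Suc m)
    have "\<forall>j<length Vs. ?ys m ! j \<in> Vs ! j" using xs closed by auto
    moreover have "?ys (Suc m) = (?ys m)[m := c m *\<^sub>R (?ys m ! m)]"
      using Suc.prems by (intro nth_equalityI) (auto simp: nth_list_update)
    ultimately have "F (?ys (Suc m)) = c m *\<^sub>R F (?ys m)"
      using multilinear_into_scale_arg[OF F, of "?ys m" m "c m"] Suc.prems by simp
    with Suc show ?case by simp
  qed
  moreover have "?ys (length Vs) = map (\<lambda>k. c k *\<^sub>R xs ! k) [0..<length Vs]" by simp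
  ultimately show ?thesis by (metis order.refl)
qed

lemma multilinear_into_scale_blocks:
  assumes F: "multilinear_into (map Vf \<rho>) W F"
    and closed: "\<And>B c x. B \<in> set \<rho> \<Longrightarrow> x \<in> Vf B \<Longrightarrow> c *\<^sub>R x \<in> Vf B"
    and u: "\<And>B. B \<in> set \<rho> \<Longrightarrow> u B \<in> Vf B"
  shows "F (map (\<lambda>B. c B *\<^sub>R u B) \<rho>) = prod_list (map c \<rho>) *\<^sub>R F (map u \<rho>)"
proof -
  have "F (map (\<lambda>k. c (\<rho> ! k) *\<^sub>R map u \<rho> ! k) [0..<length (map Vf \<rho>)])
      = (\<Prod>k<length (map Vf \<rho>). c (\<rho> ! k)) *\<^sub>R F (map u \<rho>)"
    by (rule multilinear_into_scale_args[OF F]) (use closed u in auto)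
  moreover have "map (\<lambda>k. c (\<rho> ! k) *\<^sub>R map u \<rho> ! k) [0..<length (map Vf \<rho>)]
      = map (\<lambda>B. c B *\<^sub>R u B) \<rho>"
    by (intro nth_equalityI) auto
  moreover have "(\<Prod>k<length \<rho>. c (\<rho> ! k)) = prod_list (map c \<rho>)"
    by (induction \<rho>) (auto simp: prod.lessThan_Suc_shift simp del: prod.lessThan_Suc)
  ultimately show ?thesis by simp
qed

lemma antisym_if_alternating:
  fixes f :: "'a::ab_group_add \<Rightarrow> 'a \<Rightarrow> 'b::ab_group_add"
  assumes S: "x \<in> S" "y \<in> S" "x + y \<in> S"
    and alt: "\<And>a. a \<in> S \<Longrightarrow> f a a = 0"
    and add1: "\<And>a a' b. a \<in> S \<Longrightarrow> a' \<in> S \<Longrightarrow> b \<in> S \<Longrightarrow> f (a + a') b = f a b + f a' b"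
    and add2: "\<And>a b b'. a \<in> S \<Longrightarrow> b \<in> S \<Longrightarrow> b' \<in> S \<Longrightarrow> f a (b + b') = f a b + f a b'"
  shows "f y x = - f x y"
proof -
  have "0 = f (x + y) (x + y)" using alt S by simp
  also have "\<dots> = f x x + f x y + (f y x + f y y)" using S by (simp add: add1 add2)
  also have "\<dots> = f x y + f y x" using S by (simp add: alt)
  finally show ?thesis by (simp add: eq_neg_iff_add_eq_0 add.commute)
qed

lemma sym_alt_swap:
  fixes F :: "'v::real_vector list \<Rightarrow> 'v"
  assumes sa: "sym_alt V ls F" and F: "multilinear_into (map V ls) W F" and sub: "\<And>k. subspace (V k)"
    and xs: "length xs = length ls" "\<forall>k<length ls. xs ! k \<in> V (ls ! k)"
    and ij: "i < j" "j < length ls" "ls ! i = ls ! j"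
  shows "F (xs[i := xs ! j, j := xs ! i]) = (-1) ^ (ls ! i) *\<^sub>R F xs"
proof (cases "even (ls ! i)")
  case True
  then show ?thesis using sa xs ij unfolding sym_alt_def by auto
next
  case False
  let ?x = "xs ! i" and ?y = "xs ! j" and ?S = "V (ls ! i)"
  define f where "f a b = F (xs[i := a, j := b])" for a b
  have x: "?x \<in> ?S" using xs(2) ij(1,2) by simp
  have y: "?y \<in> ?S" using xs(2) ij(2,3) by simp
  have xy: "?x + ?y \<in> ?S" using x y sub subspace_add by blast
  have len: "length (xs[i := a, j := b]) = length ls" for a b
    using xs(1) by simp
  have args: "\<forall>k<length ls. xs[i := a, j := b] ! k \<in> V (ls ! k)" if "a \<in> ?S" "b \<in> ?S" for a b
    using that xs ij by (auto simp: nth_list_update)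
  have alt: "f a a = 0" if "a \<in> ?S" for a
  proof -
    have "xs[i := a, j := a] ! i = xs[i := a, j := a] ! j"
      using ij xs(1) by (simp add: nth_list_update)
    then show ?thesis
      using sa[unfolded sym_alt_def, rule_format, of "xs[i := a, j := a]" i j]
        len args[OF that that] ij False
      by (simp add: f_def)
  qed
  have upd: "xs[i := a, j := b, i := c] = xs[i := c, j := b]" for a b c
    using ij by (simp add: list_update_swap[of j i])
  have add1: "f (a + a') b = f a b + f a' b" if "a \<in> ?S" "a' \<in> ?S" "b \<in> ?S" for a a' b
  proof -
    have "F (xs[i := a, j := b, i := 1 *\<^sub>R a + 1 *\<^sub>R a'])
        = 1 *\<^sub>R F (xs[i := a, j := b, i := a]) + 1 *\<^sub>R F (xs[i := a, j := b, i := a'])"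
      by (rule multilinear_intoD[OF F]) (use len args[OF that(1,3)] ij that in auto)
    then show ?thesis by (simp add: f_def upd)
  qed
  have add2: "f a (b + b') = f a b + f a b'" if "a \<in> ?S" "b \<in> ?S" "b' \<in> ?S" for a b b'
  proof -
    have "F (xs[i := a, j := b, j := 1 *\<^sub>R b + 1 *\<^sub>R b'])
        = 1 *\<^sub>R F (xs[i := a, j := b, j := b]) + 1 *\<^sub>R F (xs[i := a, j := b, j := b'])"
      by (rule multilinear_intoD[OF F]) (use len args[OF that(1,2)] ij that in auto)
    then show ?thesis by (simp add: f_def)
  qed
  have "f ?y ?x = - f ?x ?y"
    using x y xy alt add1 add2 by (rule antisym_if_alternating)
  then show ?thesis using False by (simp add: f_def)
qed

lemma list_decompose_two:
  assumes "i < j" "j < length X"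
  obtains P C Q where "X = P @ X ! i # C @ X ! j # Q" "i = length P" "j = length P + Suc (length C)"
proof -
  let ?R = "drop (Suc i) X"
  have "X = take i X @ X ! i # ?R" using assms by (simp add: id_take_nth_drop)
  moreover have "?R = take (j - Suc i) ?R @ X ! j # drop (Suc (j - Suc i)) ?R"
    using assms id_take_nth_drop[of "j - Suc i" ?R] by simp
  ultimately have "X = take i X @ X ! i # take (j - Suc i) ?R @ X ! j # drop (Suc (j - Suc i)) ?R"
    by metis
  then show ?thesis by (rule that) (use assms in simp_all)
qed

lemma part_sgn_scaleR_swap:
  fixes F :: "'v::real_vector list \<Rightarrow> 'v"
  assumes sa: "sym_alt V ls F" and F: "multilinear_into (map V ls) W F" and sub: "\<And>k. subspace (V k)"
    and X: "disjoint_blocks X" "map card X = ls" "\<And>B. B \<in> set X \<Longrightarrow> u B \<in> V (card B)"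
    and ij: "i < j" "j < length X" "card (X ! i) = card (X ! j)"
  shows "part_sgn (X[i := X ! j, j := X ! i]) *\<^sub>R F (map u (X[i := X ! j, j := X ! i]))
       = part_sgn X *\<^sub>R F (map u X)"
proof -
  define A B where "A = X ! i" and "B = X ! j"
  obtain P C Q where X_eq: "X = P @ A # C @ B # Q"
    and i: "i = length P" and j: "j = length P + Suc (length C)"
    using list_decompose_two[OF ij(1,2)] unfolding A_def B_def .
  have swap: "X[i := X ! j, j := X ! i] = P @ B # C @ A # Q"
    unfolding A_def[symmetric] B_def[symmetric] X_eq i j by (simp add: list_update_append nth_append)
  have "card A = card B" using ij(3) by (simp add: A_def B_def)
  with X(1) have "part_sgn (P @ A # C @ B # Q) = (-1) ^ card A * part_sgn (P @ B # C @ A # Q)"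
    unfolding X_eq by (rule part_sgn_swap)
  then have sgn: "part_sgn X = (-1) ^ card A * part_sgn (X[i := X ! j, j := X ! i])"
    by (simp only: swap flip: X_eq)
  have "F ((map u X)[i := map u X ! j, j := map u X ! i]) = (-1) ^ (ls ! i) *\<^sub>R F (map u X)"
    using X ij by (intro sym_alt_swap[OF sa F sub]) auto
  moreover have "ls ! i = card A" using X(2) ij by (auto simp: A_def)
  ultimately have "F (map u (X[i := X ! j, j := X ! i])) = (-1) ^ card A *\<^sub>R F (map u X)"
    using ij by (simp add: map_update)
  with sgn show ?thesis by simp
qed

lemma part_sgn_scaleR_reorder:
  fixes F :: "'v::real_vector list \<Rightarrow> 'v"
  assumes sa: "sym_alt V ls F" and F: "multilinear_into (map V ls) W F" and sub: "\<And>k. subspace (V k)"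
    and X: "disjoint_blocks X" "map card X = ls" "set X = set Y"
    and Y: "disjoint_blocks Y" "map card Y = ls"
    and u: "\<And>B. B \<in> set Y \<Longrightarrow> u B \<in> V (card B)"
  shows "part_sgn X *\<^sub>R F (map u X) = part_sgn Y *\<^sub>R F (map u Y)"
  using X
proof (induction "card {i. i < length X \<and> X ! i \<noteq> Y ! i}" arbitrary: X rule: less_induct)
  case less
  let ?D = "\<lambda>X. {i. i < length X \<and> X ! i \<noteq> Y ! i}"
  have len: "length X = length Y" using less.prems(2) Y(2) by (metis length_map)
  show ?case
  proof (cases "X = Y")
    case False
    then obtain i where i: "i < length X" "X ! i \<noteq> Y ! i" using len nth_equalityI by blast
    then have "Y ! i \<in> set X" using len less.prems(3) by simp
    then obtain k where k: "k < length X" "X ! k = Y ! i" by (auto simp: in_set_conv_nth)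
    have cards: "card (X ! i) = card (X ! k)"
      using less.prems(2) Y(2) i k len by (metis nth_map)
    have "i \<noteq> k" using i k by auto
    \<comment> \<open>swapping entries i and k of X repairs position i and spoils no other position\<close>
    define X' where "X' = X[i := X ! k, k := X ! i]"
    have X'_swap: "X' = X[min i k := X ! max i k, max i k := X ! min i k]"
      unfolding X'_def using \<open>i \<noteq> k\<close> by (cases "i < k") (auto simp: list_update_swap min_def max_def)
    have step: "part_sgn X' *\<^sub>R F (map u X') = part_sgn X *\<^sub>R F (map u X)"
      unfolding X'_swap using less.prems i k cards \<open>i \<noteq> k\<close> u
      by (intro part_sgn_scaleR_swap[OF sa F sub]) (auto simp: min_def max_def)
    have "set X' = set X" "distinct X' = distinct X"
      unfolding X'_def using i(1) k(1) by simp_all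
    moreover have "map card X' = map card X"
      unfolding X'_def by (rule nth_equalityI) (use cards i k in \<open>auto simp: nth_list_update\<close>)
    ultimately have X': "disjoint_blocks X'" "map card X' = ls" "set X' = set Y"
      using less.prems by (auto simp: disjoint_blocks_def)
    have "Y ! k \<noteq> Y ! i"
      using Y(1) i k len \<open>i \<noteq> k\<close> by (simp add: disjoint_blocks_def nth_eq_iff_index_eq)
    then have "?D X' \<subseteq> ?D X - {i}"
      using i k by (auto simp: X'_def nth_list_update)
    with i have "?D X' \<subset> ?D X" by blast
    then have "card (?D X') < card (?D X)"
      by (rule psubset_card_mono[rotated]) simp
    then show ?thesis using less.hyps X' step by auto
  qed simp
qed

section \<open>Canonical order of blocks\<close>

lemma block_less_irrefl: "\<not> block_less A A"
  unfolding block_less_def using lexord_irreflexive[of "{(x, y). x < (y::nat)}"] by auto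

lemma block_less_trans: "block_less A B \<Longrightarrow> block_less B C \<Longrightarrow> block_less A C"
proof -
  have "trans {(x, y). x < (y::nat)}" by (auto simp: trans_def)
  then show "block_less A B \<Longrightarrow> block_less B C \<Longrightarrow> block_less A C"
    unfolding block_less_def using lexord_trans by auto
qed

lemma block_less_linear:
  assumes "finite A" "finite B" "A \<noteq> B"
  shows "block_less A B \<or> block_less B A"
proof -
  have "sorted_list_of_set A \<noteq> sorted_list_of_set B"
    using assms by (metis set_sorted_list_of_set)
  moreover have "(sorted_list_of_set A, sorted_list_of_set B) \<in> lexord {(x, y). x < (y::nat)}
      \<or> sorted_list_of_set A = sorted_list_of_set B
      \<or> (sorted_list_of_set B, sorted_list_of_set A) \<in> lexord {(x, y). x < (y::nat)}"
    by (rule lexord_linear) auto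
  ultimately show ?thesis unfolding block_less_def by auto
qed

lemma sorted_wrt_block_less_distinct: "sorted_wrt block_less xs \<Longrightarrow> distinct xs"
  by (induction xs) (auto simp: block_less_irrefl)

lemma sorted_map_card_if_sorted_wrt_block_less:
  assumes "sorted_wrt block_less xs"
  shows "sorted (map card xs)"
proof -
  have "sorted_wrt (\<lambda>A B. card A \<le> card B) xs"
    using assms by (rule sorted_wrt_mono_rel[rotated]) (auto simp: block_less_def)
  then show ?thesis by (simp add: sorted_wrt_map)
qed

lemma sorted_wrt_block_less_unique:
  "sorted_wrt block_less xs \<Longrightarrow> sorted_wrt block_less ys \<Longrightarrow> set xs = set ys \<Longrightarrow> xs = ys"
proof (induction xs arbitrary: ys)
  case Nil
  then show ?case by simp
next
  case (Cons x xs)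
  then obtain y ys' where ys: "ys = y # ys'" by (cases ys) auto
  have "x = y"
  proof (rule ccontr)
    assume "x \<noteq> y"
    then have "block_less x y" "block_less y x" using Cons.prems ys by auto
    then show False using block_less_trans block_less_irrefl by blast
  qed
  moreover have "distinct (x # xs)" "distinct (y # ys')"
    using Cons.prems ys by (simp_all only: sorted_wrt_block_less_distinct)
  then have "set xs = set ys'" using Cons.prems(3) ys \<open>x = y\<close> by auto
  ultimately show ?case using Cons ys by simp
qed

lemma sorted_wrt_block_less_exists:
  "finite S \<Longrightarrow> \<forall>A\<in>S. finite A \<Longrightarrow> \<exists>xs. set xs = S \<and> sorted_wrt block_less xs"
proof (induction S rule: finite_induct)
  case empty
  then show ?case by simp
next
  case (insert a S)
  then obtain xs where xs: "set xs = S" "sorted_wrt block_less xs" by auto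
  let ?ys = "filter (\<lambda>y. block_less y a) xs @ a # filter (block_less a) xs"
  have "\<And>y. y \<in> S \<Longrightarrow> block_less y a \<or> block_less a y"
    using insert block_less_linear by (metis insert_iff)
  then have "set ?ys = insert a S" using xs by auto
  moreover have "sorted_wrt block_less ?ys"
    unfolding sorted_wrt_append
    using sorted_wrt_filter[OF xs(2)] block_less_trans by fastforce
  ultimately show ?case by blast
qed

definition canonical_sort :: "nat set set \<Rightarrow> nat set list" where
  "canonical_sort S = (THE xs. set xs = S \<and> sorted_wrt block_less xs)"

lemma canonical_sort:
  assumes "finite S" "\<forall>A\<in>S. finite A"
  shows "set (canonical_sort S) = S" "sorted_wrt block_less (canonical_sort S)"
proof -
  obtain xs where xs: "set xs = S \<and> sorted_wrt block_less xs"
    using sorted_wrt_block_less_exists[OF assms] by blast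
  then have "set (canonical_sort S) = S \<and> sorted_wrt block_less (canonical_sort S)"
    unfolding canonical_sort_def by (rule theI) (use xs sorted_wrt_block_less_unique in blast)
  then show "set (canonical_sort S) = S" "sorted_wrt block_less (canonical_sort S)" by auto
qed

lemma canonical_sort_set: "sorted_wrt block_less xs \<Longrightarrow> canonical_sort (set xs) = xs"
  unfolding canonical_sort_def by (rule the_equality) (auto intro: sorted_wrt_block_less_unique)

lemma disjoint_set_conv_nth:
  assumes "distinct xs"
  shows "disjoint (set xs) \<longleftrightarrow> (\<forall>i<length xs. \<forall>j<length xs. i \<noteq> j \<longrightarrow> xs ! i \<inter> xs ! j = {})"
proof
  assume "disjoint (set xs)"
  then show "\<forall>i<length xs. \<forall>j<length xs. i \<noteq> j \<longrightarrow> xs ! i \<inter> xs ! j = {}"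
    using assms by (auto simp: disjoint_def nth_eq_iff_index_eq)
next
  assume nth: "\<forall>i<length xs. \<forall>j<length xs. i \<noteq> j \<longrightarrow> xs ! i \<inter> xs ! j = {}"
  show "disjoint (set xs)"
  proof (rule disjointI)
    fix A B assume "A \<in> set xs" "B \<in> set xs" "A \<noteq> B"
    then obtain i j where "i < length xs" "j < length xs" "A = xs ! i" "B = xs ! j"
      by (metis in_set_conv_nth)
    with nth \<open>A \<noteq> B\<close> show "A \<inter> B = {}" by blast
  qed
qed

lemma canon_partitions_iff:
  "\<rho> \<in> canon_partitions I \<longleftrightarrow> (\<forall>B\<in>set \<rho>. B \<noteq> {}) \<and> \<Union>(set \<rho>) = I \<and>
      disjoint (set \<rho>) \<and> sorted_wrt block_less \<rho>"
  unfolding canon_partitions_def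
  by (auto simp: disjoint_set_conv_nth sorted_wrt_block_less_distinct) blast

lemma canon_partitions_disjoint_blocks:
  "\<rho> \<in> canon_partitions I \<Longrightarrow> finite I \<Longrightarrow> disjoint_blocks \<rho>"
  by (auto simp: canon_partitions_iff disjoint_blocks_def sorted_wrt_block_less_distinct
      intro: finite_subset)

lemma canon_partitions_subset: "\<rho> \<in> canon_partitions I \<Longrightarrow> B \<in> set \<rho> \<Longrightarrow> B \<noteq> {} \<and> B \<subseteq> I"
  by (auto simp: canon_partitions_iff)

definition canonical_image :: "(nat \<Rightarrow> nat) \<Rightarrow> nat set list \<Rightarrow> nat set list" where
  "canonical_image g \<rho> = canonical_sort ((`) g ` set \<rho>)"

lemma
  assumes \<rho>: "\<rho> \<in> canon_partitions I" and "finite I" "inj_on g I"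
  shows set_canonical_image: "set (canonical_image g \<rho>) = (`) g ` set \<rho>"
    and canonical_image_mem: "canonical_image g \<rho> \<in> canon_partitions (g ` I)"
proof -
  have sub: "\<And>B. B \<in> set \<rho> \<Longrightarrow> B \<noteq> {} \<and> B \<subseteq> I"
    using canon_partitions_subset[OF \<rho>] .
  then have fin: "\<forall>A\<in>(`) g ` set \<rho>. finite A"
    using assms(2) by (auto intro: finite_subset)
  then show set: "set (canonical_image g \<rho>) = (`) g ` set \<rho>"
    unfolding canonical_image_def by (simp add: canonical_sort)
  have "disjoint ((`) g ` set \<rho>)"
  proof (rule disjointI)
    fix A' B' assume "A' \<in> (`) g ` set \<rho>" "B' \<in> (`) g ` set \<rho>" "A' \<noteq> B'"
    then obtain A B where AB: "A \<in> set \<rho>" "B \<in> set \<rho>" "A' = g ` A" "B' = g ` B" "A \<noteq> B"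
      by auto
    then have "A \<inter> B = {}" using \<rho> by (auto simp: canon_partitions_iff disjoint_def)
    with AB sub inj_on_image_Int[OF assms(3), of A B] show "A' \<inter> B' = {}" by auto
  qed
  with \<rho> show "canonical_image g \<rho> \<in> canon_partitions (g ` I)"
    unfolding canon_partitions_iff set using canonical_sort(2)[OF _ fin]
    by (auto simp: canonical_image_def)
qed

lemma map_card_canonical_image:
  assumes \<rho>: "\<rho> \<in> canon_partitions I" and I: "finite I" and g: "inj_on g I"
  shows "map card (canonical_image g \<rho>) = map card \<rho>"
proof -
  let ?\<rho>' = "canonical_image g \<rho>"
  have "inj_on ((`) g) (set \<rho>)"
  proof (rule inj_onI)
    fix A B assume "A \<in> set \<rho>" "B \<in> set \<rho>" "g ` A = g ` B"
    then show "A = B" using g canon_partitions_subset[OF \<rho>] by (meson inj_on_image_eq_iff)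
  qed
  moreover have "distinct \<rho>" "distinct ?\<rho>'"
    using \<rho> canonical_image_mem[OF assms]
    by (simp_all add: canon_partitions_iff sorted_wrt_block_less_distinct)
  ultimately have "mset ?\<rho>' = mset (map ((`) g) \<rho>)"
    using set_canonical_image[OF assms] by (metis distinct_map list.set_map mset_set_set)
  moreover have "card (g ` B) = card B" if "B \<in> set \<rho>" for B
    using canon_partitions_subset[OF \<rho> that] g by (metis card_image inj_on_subset)
  then have "map card (map ((`) g) \<rho>) = map card \<rho>" by simp
  ultimately have "mset (map card ?\<rho>') = mset (map card \<rho>)"
    by (metis mset_map)
  moreover have "sorted (map card ?\<rho>')"
    using canonical_image_mem[OF assms] sorted_map_card_if_sorted_wrt_block_less
    by (simp add: canon_partitions_iff)
  ultimately have "sort (map card \<rho>) = map card ?\<rho>'"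
    by (rule properties_for_sort)
  moreover have "sorted (map card \<rho>)"
    using \<rho> sorted_map_card_if_sorted_wrt_block_less by (simp add: canon_partitions_iff)
  ultimately show ?thesis by (simp add: sorted_sort_id)
qed

lemma canonical_image_inverse:
  assumes \<rho>: "\<rho> \<in> canon_partitions I" and "finite I" "inj_on g I"
    and hg: "\<And>x. x \<in> I \<Longrightarrow> h (g x) = x"
  shows "canonical_image h (canonical_image g \<rho>) = \<rho>"
proof -
  have "h ` g ` B = B" if "B \<in> set \<rho>" for B
    using hg canon_partitions_subset[OF \<rho> that] by (force simp: image_image)
  then have "(`) h ` set (canonical_image g \<rho>) = set \<rho>"
    unfolding set_canonical_image[OF assms(1-3)] image_image by simp
  then show ?thesis
    using \<rho> unfolding canonical_image_def[of h] by (simp add: canonical_sort_set canon_partitions_iff)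
qed

lemma bij_betw_canonical_image:
  assumes g: "bij g" and I: "finite I"
  shows "bij_betw (canonical_image g) (canon_partitions I) (canon_partitions (g ` I))"
proof (rule bij_betw_byWitness[where f' = "canonical_image (inv g)"])
  have inj: "inj_on g I" "inj_on (inv g) (g ` I)"
    using bij_is_inj[OF g] bij_is_inj[OF bij_imp_bij_inv[OF g]] by (auto intro: inj_on_subset)
  have inv: "\<And>x. inv g (g x) = x" "\<And>x. g (inv g x) = x"
    using inv_f_f[OF bij_is_inj[OF g]] surj_f_inv_f[OF bij_is_surj[OF g]] by auto
  have gI: "finite (g ` I)" "inv g ` g ` I = I"
    using I by (simp_all add: image_image inv)
  show "\<forall>\<rho>\<in>canon_partitions I. canonical_image (inv g) (canonical_image g \<rho>) = \<rho>"
    using canonical_image_inverse[OF _ I inj(1)] inv(1) by blast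
  show "\<forall>\<rho>\<in>canon_partitions (g ` I). canonical_image g (canonical_image (inv g) \<rho>) = \<rho>"
    using canonical_image_inverse[OF _ gI(1) inj(2)] inv(2) by blast
  show "canonical_image g ` canon_partitions I \<subseteq> canon_partitions (g ` I)"
    using canonical_image_mem[OF _ I inj(1)] by blast
  show "canonical_image (inv g) ` canon_partitions (g ` I) \<subseteq> canon_partitions I"
    using canonical_image_mem[OF _ gI(1) inj(2)] unfolding gI(2) by blast
qed

section \<open>Equivariance of the chart transitions\<close>

lemma Idx_image:
  assumes "g permutes {1..n}" "I \<in> Idx n"
  shows "g ` I \<in> Idx n"
  using assms permutes_image[OF assms(1)] by (auto simp: Idx_def)

lemma card_image_permutes: "g permutes S \<Longrightarrow> card (g ` I) = card I"
  by (metis card_image permutes_inj_on)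

lemma Idx_of_canon_partitions:
  "I \<in> Idx n \<Longrightarrow> \<rho> \<in> canon_partitions I \<Longrightarrow> B \<in> set \<rho> \<Longrightarrow> B \<in> Idx n"
  using canon_partitions_subset by (fastforce simp: Idx_def)

lemma finite_Idx: "I \<in> Idx n \<Longrightarrow> finite I"
  by (auto simp: Idx_def intro: finite_subset)

definition symmetric_coefficients ::
  "nat \<Rightarrow> (nat \<Rightarrow> 'v::real_vector set) \<Rightarrow> (nat set list \<Rightarrow> 'v list \<Rightarrow> 'v) \<Rightarrow> bool" where
  "symmetric_coefficients n V \<omega> \<longleftrightarrow>
     (\<forall>I\<in>Idx n. \<forall>\<rho>\<in>canon_partitions I.
        multilinear_into (map (\<lambda>B. V (card B)) \<rho>) (V (card I)) (\<omega> \<rho>)) \<and>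
     (\<forall>I\<in>Idx n. \<forall>J\<in>Idx n. \<forall>\<rho>1\<in>canon_partitions I. \<forall>\<rho>2\<in>canon_partitions J.
        map card \<rho>1 = map card \<rho>2 \<longrightarrow> (\<forall>args. part_sgn \<rho>1 *\<^sub>R \<omega> \<rho>1 args = part_sgn \<rho>2 *\<^sub>R \<omega> \<rho>2 args)) \<and>
     (\<forall>I\<in>Idx n. \<forall>\<rho>\<in>canon_partitions I. sym_alt V (map card \<rho>) (\<lambda>args. part_sgn \<rho> *\<^sub>R \<omega> \<rho> args))"

lemma canonical_image_permutes:
  assumes g: "g permutes {1..n}" and I: "I \<in> Idx n" and \<rho>: "\<rho> \<in> canon_partitions I"
  shows "canonical_image g \<rho> \<in> canon_partitions (g ` I)"
    and "set (canonical_image g \<rho>) = set (map ((`) g) \<rho>)"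
    and "map card (canonical_image g \<rho>) = map card \<rho>"
    and "map card (map ((`) g) \<rho>) = map card \<rho>"
proof -
  have "finite I" "inj_on g I" using finite_Idx[OF I] permutes_inj_on[OF g] by auto
  then show "canonical_image g \<rho> \<in> canon_partitions (g ` I)"
    and "set (canonical_image g \<rho>) = set (map ((`) g) \<rho>)"
    and "map card (canonical_image g \<rho>) = map card \<rho>"
    using canonical_image_mem set_canonical_image map_card_canonical_image \<rho> by auto
  show "map card (map ((`) g) \<rho>) = map card \<rho>"
    using card_image_permutes[OF g] by simp
qed

lemma part_sgn_image_permutes:
  assumes g: "g permutes {1..n}" and I: "I \<in> Idx n" and \<rho>: "\<rho> \<in> canon_partitions I"
  shows "perm_eps g I * (part_sgn (map ((`) g) \<rho>) * part_sgn \<rho>) = prod_list (map (perm_eps g) \<rho>)"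
proof -
  have "part_sgn (map ((`) g) \<rho>) * prod_list (map (perm_eps g) \<rho>) = part_sgn \<rho> * perm_eps g I"
    using part_sgn_image[OF canon_partitions_disjoint_blocks[OF \<rho> finite_Idx[OF I]]
        inj_on_subset[OF permutes_inj[OF g]]] \<rho>
    by (simp add: canon_partitions_iff)
  then show ?thesis
    using part_sgn_mult_self[of \<rho>] part_sgn_mult_self[of "map ((`) g) \<rho>"]
    by (metis mult.assoc mult.commute mult_1_left)
qed

lemma coefficient_term_permute:
  fixes \<omega> :: "nat set list \<Rightarrow> 'v::real_vector list \<Rightarrow> 'v"
  assumes g: "g permutes {1..n}" and I: "I \<in> Idx n" and \<rho>: "\<rho> \<in> canon_partitions I"
    and sub: "\<And>k. subspace (V k)" and v: "\<And>B. B \<in> Idx n \<Longrightarrow> v B \<in> V (card B)"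
    and \<omega>: "symmetric_coefficients n V \<omega>"
  shows "\<omega> \<rho> (map (\<lambda>B. perm_eps g B *\<^sub>R v (g ` B)) \<rho>)
       = perm_eps g I *\<^sub>R \<omega> (canonical_image g \<rho>) (map v (canonical_image g \<rho>))"
proof -
  let ?\<rho>' = "canonical_image g \<rho>" and ?X = "map ((`) g) \<rho>"
  note \<rho>' = canonical_image_permutes[OF g I \<rho>]
  have gI: "g ` I \<in> Idx n" using Idx_image[OF g I] .
  have blocks: "\<And>B. B \<in> set \<rho> \<Longrightarrow> B \<in> Idx n" "\<And>B. B \<in> set ?\<rho>' \<Longrightarrow> B \<in> Idx n"
    using Idx_of_canon_partitions I gI \<rho> \<rho>'(1) by blast+
  have ml: "multilinear_into (map (\<lambda>B. V (card B)) \<rho>) (V (card I)) (\<omega> \<rho>)"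
    and ml': "multilinear_into (map (\<lambda>B. V (card B)) ?\<rho>') (V (card (g ` I))) (\<omega> ?\<rho>')"
    and sgn: "\<And>a. part_sgn \<rho> *\<^sub>R \<omega> \<rho> a = part_sgn ?\<rho>' *\<^sub>R \<omega> ?\<rho>' a"
    and sa: "sym_alt V (map card ?\<rho>') (\<lambda>a. part_sgn ?\<rho>' *\<^sub>R \<omega> ?\<rho>' a)"
    using \<omega> I gI \<rho> \<rho>'(1,3) unfolding symmetric_coefficients_def by metis+
  have "\<And>B c x. B \<in> set \<rho> \<Longrightarrow> x \<in> V (card B) \<Longrightarrow> c *\<^sub>R x \<in> V (card B)"
    using sub subspace_scale by blast
  moreover have "\<And>B. B \<in> set \<rho> \<Longrightarrow> v (g ` B) \<in> V (card B)"
    using v Idx_image[OF g] blocks(1) card_image_permutes[OF g] by metis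
  ultimately have "\<omega> \<rho> (map (\<lambda>B. perm_eps g B *\<^sub>R v (g ` B)) \<rho>)
      = prod_list (map (perm_eps g) \<rho>) *\<^sub>R \<omega> \<rho> (map v ?X)"
    using multilinear_into_scale_blocks[OF ml] by (simp add: o_def)
  moreover have "part_sgn ?X *\<^sub>R (part_sgn ?\<rho>' *\<^sub>R \<omega> ?\<rho>' (map v ?X))
      = part_sgn ?\<rho>' *\<^sub>R (part_sgn ?\<rho>' *\<^sub>R \<omega> ?\<rho>' (map v ?\<rho>'))"
  proof (rule part_sgn_scaleR_reorder[OF sa _ sub])
    show "multilinear_into (map V (map card ?\<rho>')) (V (card (g ` I))) (\<lambda>a. part_sgn ?\<rho>' *\<^sub>R \<omega> ?\<rho>' a)"
      using multilinear_into_scaleR[OF ml' subspace_scale[OF sub]] by (simp add: o_def)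
    show "disjoint_blocks ?X" "disjoint_blocks ?\<rho>'"
      using canon_partitions_disjoint_blocks \<rho> \<rho>'(1) finite_Idx I gI disjoint_blocks_image
        permutes_inj[OF g] by blast+
    show "\<And>B. B \<in> set ?\<rho>' \<Longrightarrow> v B \<in> V (card B)" using v blocks(2) by blast
  qed (use \<rho>'(2-4) in auto)
  then have "\<omega> ?\<rho>' (map v ?\<rho>') = part_sgn ?X *\<^sub>R (part_sgn ?\<rho>' *\<^sub>R \<omega> ?\<rho>' (map v ?X))"
    using part_sgn_mult_self[of ?\<rho>'] by simp
  then have "\<omega> ?\<rho>' (map v ?\<rho>') = (part_sgn ?X * part_sgn \<rho>) *\<^sub>R \<omega> \<rho> (map v ?X)"
    by (simp only: sgn[symmetric] scaleR_scaleR)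
  ultimately show ?thesis using part_sgn_image_permutes[OF g I \<rho>] by simp
qed

definition fiber_perm :: "nat \<Rightarrow> (nat \<Rightarrow> nat) \<Rightarrow> (nat set \<Rightarrow> 'v::real_vector) \<Rightarrow> nat set \<Rightarrow> 'v" where
  "fiber_perm n \<sigma> v = (\<lambda>I\<in>Idx n. perm_eps (inv \<sigma>) I *\<^sub>R v (inv \<sigma> ` I))"

lemma local_perm_eq: "local_perm n \<sigma> x = (fst x, fiber_perm n \<sigma> (snd x))"
  by (simp add: local_perm_def fiber_perm_def)

definition transition_fiber ::
  "nat \<Rightarrow> (nat set list \<Rightarrow> 'v list \<Rightarrow> 'v) \<Rightarrow> (nat set \<Rightarrow> 'v::real_vector) \<Rightarrow> nat set \<Rightarrow> 'v" where
  "transition_fiber n \<omega> v = (\<lambda>I\<in>Idx n. \<Sum>\<rho>\<in>canon_partitions I. \<omega> \<rho> (map v \<rho>))"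

lemma transition_fiber_fiber_perm:
  assumes \<sigma>: "\<sigma> permutes {1..n}" and sub: "\<And>k. subspace (V k)"
    and v: "v \<in> PiE (Idx n) (\<lambda>I. V (card I))" and \<omega>: "symmetric_coefficients n V \<omega>"
  shows "transition_fiber n \<omega> (fiber_perm n \<sigma> v) = fiber_perm n \<sigma> (transition_fiber n \<omega> v)"
  unfolding transition_fiber_def fiber_perm_def
proof (rule restrict_ext)
  fix I assume I: "I \<in> Idx n"
  let ?g = "inv \<sigma>"
  have g: "?g permutes {1..n}" using permutes_inv[OF \<sigma>] .
  have vV: "\<And>B. B \<in> Idx n \<Longrightarrow> v B \<in> V (card B)" using v by auto
  have "(\<Sum>\<rho>\<in>canon_partitions I.
          \<omega> \<rho> (map (\<lambda>J\<in>Idx n. perm_eps ?g J *\<^sub>R v (?g ` J)) \<rho>))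
      = (\<Sum>\<rho>\<in>canon_partitions I. perm_eps ?g I *\<^sub>R
          \<omega> (canonical_image ?g \<rho>) (map v (canonical_image ?g \<rho>)))"
  proof (rule sum.cong)
    fix \<rho> assume \<rho>: "\<rho> \<in> canon_partitions I"
    have "\<omega> \<rho> (map (\<lambda>J\<in>Idx n. perm_eps ?g J *\<^sub>R v (?g ` J)) \<rho>)
        = \<omega> \<rho> (map (\<lambda>B. perm_eps ?g B *\<^sub>R v (?g ` B)) \<rho>)"
      using Idx_of_canon_partitions[OF I \<rho>] by (intro arg_cong[where f = "\<omega> \<rho>"] map_cong) auto
    also have "\<dots> = perm_eps ?g I *\<^sub>R \<omega> (canonical_image ?g \<rho>) (map v (canonical_image ?g \<rho>))"
      using coefficient_term_permute[OF g I \<rho> sub vV \<omega>] .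
    finally show "\<omega> \<rho> (map (\<lambda>J\<in>Idx n. perm_eps ?g J *\<^sub>R v (?g ` J)) \<rho>)
        = perm_eps ?g I *\<^sub>R \<omega> (canonical_image ?g \<rho>) (map v (canonical_image ?g \<rho>))" .
  qed simp
  also have "\<dots> = perm_eps ?g I *\<^sub>R (\<Sum>\<rho>\<in>canon_partitions (?g ` I). \<omega> \<rho> (map v \<rho>))"
    using sum.reindex_bij_betw[OF bij_betw_canonical_image[OF permutes_bij[OF g] finite_Idx[OF I]]]
    by (simp add: scaleR_sum_right)
  finally show "(\<Sum>\<rho>\<in>canon_partitions I. \<omega> \<rho> (map (\<lambda>J\<in>Idx n. perm_eps ?g J *\<^sub>R v (?g ` J)) \<rho>))
      = perm_eps ?g I *\<^sub>R (\<lambda>I\<in>Idx n. \<Sum>\<rho>\<in>canon_partitions I. \<omega> \<rho> (map v \<rho>)) (?g ` I)"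
    using Idx_image[OF g I] by simp
qed

lemma fiber_perm_PiE:
  assumes "\<sigma> permutes {1..n}" "\<And>k. subspace (V k)" "v \<in> PiE (Idx n) (\<lambda>I. V (card I))"
  shows "fiber_perm n \<sigma> v \<in> PiE (Idx n) (\<lambda>I. V (card I))"
  unfolding fiber_perm_def restrict_PiE_iff
proof
  fix I assume "I \<in> Idx n"
  then have "v (inv \<sigma> ` I) \<in> V (card I)"
    using assms(3) Idx_image[OF permutes_inv[OF assms(1)]] card_image_permutes[OF permutes_inv[OF assms(1)]]
    by (metis PiE_mem)
  then show "perm_eps (inv \<sigma>) I *\<^sub>R v (inv \<sigma> ` I) \<in> V (card I)"
    using assms(2) by (rule subspace_scale[rotated])
qed

lemma fiber_perm_id: "v \<in> extensional (Idx n) \<Longrightarrow> fiber_perm n id v = v"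
  by (auto simp: fiber_perm_def perm_eps_id extensional_def)

lemma fiber_perm_comp:
  assumes \<sigma>: "\<sigma> permutes {1..n}" and \<tau>: "\<tau> permutes {1..n}"
  shows "fiber_perm n (\<sigma> \<circ> \<tau>) v = fiber_perm n \<sigma> (fiber_perm n \<tau> v)"
  unfolding fiber_perm_def
proof (rule restrict_ext)
  fix I assume I: "I \<in> Idx n"
  have inv: "inv (\<sigma> \<circ> \<tau>) = inv \<tau> \<circ> inv \<sigma>"
    using o_inv_distrib permutes_bij \<sigma> \<tau> by blast
  have "perm_eps (inv \<tau> \<circ> inv \<sigma>) I = perm_eps (inv \<sigma>) I * perm_eps (inv \<tau>) (inv \<sigma> ` I)"
    using permutes_inj_on[OF permutes_inv[OF \<sigma>]] permutes_inj_on[OF permutes_inv[OF \<tau>]] finite_Idx[OF I]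
    by (intro perm_eps_comp)
  then show "perm_eps (inv (\<sigma> \<circ> \<tau>)) I *\<^sub>R v (inv (\<sigma> \<circ> \<tau>) ` I)
      = perm_eps (inv \<sigma>) I *\<^sub>R (\<lambda>J\<in>Idx n. perm_eps (inv \<tau>) J *\<^sub>R v (inv \<tau> ` J)) (inv \<sigma> ` I)"
    using Idx_image[OF permutes_inv[OF \<sigma>] I] by (simp add: inv image_comp)
qed

section \<open>Gluing the local actions\<close>

lemma glue_local_actions:
  fixes \<Theta> :: "'a \<Rightarrow> 'e \<Rightarrow> 'x" and L :: "('b \<Rightarrow> 'b) \<Rightarrow> 'x \<Rightarrow> 'x"
  assumes cover: "\<And>e. e \<in> S \<Longrightarrow> \<exists>\<alpha>\<in>\<Lambda>. e \<in> D \<alpha>" and D: "\<And>\<alpha>. \<alpha> \<in> \<Lambda> \<Longrightarrow> D \<alpha> \<subseteq> S"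
    and inj: "\<And>\<alpha>. \<alpha> \<in> \<Lambda> \<Longrightarrow> inj_on (\<Theta> \<alpha>) (D \<alpha>)"
    and G: "id \<in> G" "\<And>\<sigma> \<tau>. \<sigma> \<in> G \<Longrightarrow> \<tau> \<in> G \<Longrightarrow> \<sigma> \<circ> \<tau> \<in> G"
    and L_range: "\<And>\<alpha> \<sigma> x. \<alpha> \<in> \<Lambda> \<Longrightarrow> \<sigma> \<in> G \<Longrightarrow> x \<in> \<Theta> \<alpha> ` D \<alpha> \<Longrightarrow> L \<sigma> x \<in> \<Theta> \<alpha> ` D \<alpha>"
    and L_id: "\<And>\<alpha> x. \<alpha> \<in> \<Lambda> \<Longrightarrow> x \<in> \<Theta> \<alpha> ` D \<alpha> \<Longrightarrow> L id x = x"
    and L_comp: "\<And>\<alpha> \<sigma> \<tau> x. \<alpha> \<in> \<Lambda> \<Longrightarrow> \<sigma> \<in> G \<Longrightarrow> \<tau> \<in> G \<Longrightarrow> x \<in> \<Theta> \<alpha> ` D \<alpha> \<Longrightarrow>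
       L (\<sigma> \<circ> \<tau>) x = L \<sigma> (L \<tau> x)"
    and compat: "\<And>\<alpha> \<beta> \<sigma> e e'. \<alpha> \<in> \<Lambda> \<Longrightarrow> \<beta> \<in> \<Lambda> \<Longrightarrow> \<sigma> \<in> G \<Longrightarrow> e \<in> D \<alpha> \<Longrightarrow> e \<in> D \<beta> \<Longrightarrow>
       e' \<in> D \<alpha> \<Longrightarrow> \<Theta> \<alpha> e' = L \<sigma> (\<Theta> \<alpha> e) \<Longrightarrow> e' \<in> D \<beta> \<and> \<Theta> \<beta> e' = L \<sigma> (\<Theta> \<beta> e)"
  shows "\<exists>\<Phi>. (\<forall>\<sigma>\<in>G. \<forall>\<alpha>\<in>\<Lambda>. \<forall>e\<in>D \<alpha>. \<Phi> \<sigma> e \<in> D \<alpha> \<and> \<Theta> \<alpha> (\<Phi> \<sigma> e) = L \<sigma> (\<Theta> \<alpha> e)) \<and>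
    (\<forall>e\<in>S. \<Phi> id e = e) \<and> (\<forall>\<sigma>\<in>G. \<forall>\<tau>\<in>G. \<forall>e\<in>S. \<Phi> (\<sigma> \<circ> \<tau>) e = \<Phi> \<sigma> (\<Phi> \<tau> e))"
proof -
  have "\<forall>e\<in>S. \<exists>\<alpha>. \<alpha> \<in> \<Lambda> \<and> e \<in> D \<alpha>" using cover by blast
  then obtain ch where ch: "\<And>e. e \<in> S \<Longrightarrow> ch e \<in> \<Lambda> \<and> e \<in> D (ch e)"
    by (metis bchoice)
  define \<Phi> where "\<Phi> \<sigma> e = (if e \<in> S then inv_into (D (ch e)) (\<Theta> (ch e)) (L \<sigma> (\<Theta> (ch e) e)) else e)"
    for \<sigma> e
  have \<Phi>_ch: "\<Phi> \<sigma> e \<in> D (ch e) \<and> \<Theta> (ch e) (\<Phi> \<sigma> e) = L \<sigma> (\<Theta> (ch e) e)"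
    if "\<sigma> \<in> G" "e \<in> S" for \<sigma> e
  proof -
    have "L \<sigma> (\<Theta> (ch e) e) \<in> \<Theta> (ch e) ` D (ch e)"
      using ch[OF that(2)] that(1) by (intro L_range) auto
    then show ?thesis using that(2) by (simp add: \<Phi>_def inv_into_into f_inv_into_f)
  qed
  \<comment> \<open>by compatibility, the chart used in the definition does not matter\<close>
  have \<Phi>: "\<Phi> \<sigma> e \<in> D \<alpha> \<and> \<Theta> \<alpha> (\<Phi> \<sigma> e) = L \<sigma> (\<Theta> \<alpha> e)"
    if "\<sigma> \<in> G" "\<alpha> \<in> \<Lambda>" "e \<in> D \<alpha>" for \<sigma> \<alpha> e
  proof -
    have "e \<in> S" using D that(2,3) by blast
    then have "ch e \<in> \<Lambda>" "e \<in> D (ch e)"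
      and "\<Phi> \<sigma> e \<in> D (ch e)" "\<Theta> (ch e) (\<Phi> \<sigma> e) = L \<sigma> (\<Theta> (ch e) e)"
      using ch \<Phi>_ch[OF that(1)] by auto
    then show ?thesis using compat that by blast
  qed
  have "\<Phi> id e = e" if "e \<in> S" for e
  proof -
    have "\<Phi> id e \<in> D (ch e)" "\<Theta> (ch e) (\<Phi> id e) = \<Theta> (ch e) e"
      using \<Phi>_ch[OF G(1) that] L_id ch[OF that] by auto
    then show ?thesis
      using inj_onD[OF inj] ch[OF that] by blast
  qed
  moreover have "\<Phi> (\<sigma> \<circ> \<tau>) e = \<Phi> \<sigma> (\<Phi> \<tau> e)" if "\<sigma> \<in> G" "\<tau> \<in> G" "e \<in> S" for \<sigma> \<tau> e
  proof -
    let ?\<alpha> = "ch e"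
    have \<alpha>: "?\<alpha> \<in> \<Lambda>" "e \<in> D ?\<alpha>" using ch[OF that(3)] by auto
    have \<tau>e: "\<Phi> \<tau> e \<in> D ?\<alpha>" "\<Theta> ?\<alpha> (\<Phi> \<tau> e) = L \<tau> (\<Theta> ?\<alpha> e)"
      using \<Phi>[OF that(2) \<alpha>] by auto
    have \<sigma>\<tau>e: "\<Phi> \<sigma> (\<Phi> \<tau> e) \<in> D ?\<alpha>" "\<Theta> ?\<alpha> (\<Phi> \<sigma> (\<Phi> \<tau> e)) = L \<sigma> (L \<tau> (\<Theta> ?\<alpha> e))"
      using \<Phi>[OF that(1) \<alpha>(1) \<tau>e(1)] \<tau>e(2) by auto
    have "\<Phi> (\<sigma> \<circ> \<tau>) e \<in> D ?\<alpha>" "\<Theta> ?\<alpha> (\<Phi> (\<sigma> \<circ> \<tau>) e) = L \<sigma> (L \<tau> (\<Theta> ?\<alpha> e))"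
      using \<Phi>[OF G(2)[OF that(1,2)] \<alpha>] L_comp[OF \<alpha>(1) that(1,2)] \<alpha>(2) by auto
    with \<sigma>\<tau>e show ?thesis using inj_onD[OF inj[OF \<alpha>(1)]] by metis
  qed
  ultimately show ?thesis using \<Phi> by (intro exI[of _ \<Phi>]) blast
qed

definition chart_range :: "nat \<Rightarrow> 'm topology \<Rightarrow> (nat \<Rightarrow> 'v::real_normed_vector set) \<Rightarrow> 'm set
    \<Rightarrow> ('m \<times> (nat set \<Rightarrow> 'v)) set" where
  "chart_range n M V U = (topspace M \<inter> U) \<times> PiE (Idx n) (\<lambda>I. V (card I))"

lemma nfold_chart_bij_betw:
  assumes "nfold_chart n M E \<pi> V U \<Theta>"
  shows "bij_betw \<Theta> (chart_domain E \<pi> U) (chart_range n M V U)"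
proof -
  let ?X = "subtopology E (chart_domain E \<pi> U)" and ?Y = "prod_topology (subtopology M U) (fiber_top n V)"
  have hom: "homeomorphic_map ?X ?Y \<Theta>" using assms by (simp add: nfold_chart_def)
  have "topspace ?X = chart_domain E \<pi> U" by (auto simp: chart_domain_def)
  moreover have "topspace ?Y = chart_range n M V U"
    by (simp add: chart_range_def fiber_top_def o_def)
  ultimately show ?thesis
    using homeomorphic_imp_surjective_map[OF hom] homeomorphic_imp_injective_map[OF hom]
    by (simp add: bij_betw_def)
qed

lemma local_perm_chart_range:
  assumes "\<sigma> permutes {1..n}" "\<And>k. subspace (V k)" "x \<in> chart_range n M V U"
  shows "local_perm n \<sigma> x \<in> chart_range n M V U"
  using assms fiber_perm_PiE[of \<sigma> n V "snd x"] by (simp add: local_perm_eq chart_range_def mem_Times_iff)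

lemma local_perm_id: "x \<in> chart_range n M V U \<Longrightarrow> local_perm n id x = x"
  by (auto simp: local_perm_eq chart_range_def fiber_perm_id PiE_def)

lemma local_perm_comp:
  "\<sigma> permutes {1..n} \<Longrightarrow> \<tau> permutes {1..n} \<Longrightarrow>
   local_perm n (\<sigma> \<circ> \<tau>) x = local_perm n \<sigma> (local_perm n \<tau> x)"
  by (simp add: local_perm_eq fiber_perm_comp)

lemma symmetric_nfold_atlas_transition:
  assumes "symmetric_nfold_atlas n M E \<pi> V \<Lambda> U \<Theta>" "\<alpha> \<in> \<Lambda>" "\<beta> \<in> \<Lambda>"
  obtains \<omega> where "\<And>p. p \<in> U \<alpha> \<inter> U \<beta> \<Longrightarrow> symmetric_coefficients n V (\<omega> p)"
    and "\<And>e. e \<in> chart_domain E \<pi> (U \<alpha> \<inter> U \<beta>) \<Longrightarrow>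
      \<Theta> \<beta> e = (\<pi> e, transition_fiber n (\<omega> (\<pi> e)) (snd (\<Theta> \<alpha> e)))"
proof -
  have "\<forall>\<alpha>\<in>\<Lambda>. \<forall>\<beta>\<in>\<Lambda>. \<exists>\<omega>.
        chart_transition n M E \<pi> V (U \<alpha>) (\<Theta> \<alpha>) (U \<beta>) (\<Theta> \<beta>) \<omega> \<and>
        (\<forall>I\<in>Idx n. \<forall>J\<in>Idx n. \<forall>\<rho>1\<in>canon_partitions I. \<forall>\<rho>2\<in>canon_partitions J.
           map card \<rho>1 = map card \<rho>2 \<longrightarrow>
           (\<forall>p\<in>U \<alpha> \<inter> U \<beta>. \<forall>args. part_sgn \<rho>1 *\<^sub>R \<omega> p \<rho>1 args = part_sgn \<rho>2 *\<^sub>R \<omega> p \<rho>2 args)) \<and>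
        (\<forall>I\<in>Idx n. \<forall>\<rho>\<in>canon_partitions I. \<forall>p\<in>U \<alpha> \<inter> U \<beta>.
           sym_alt V (map card \<rho>) (\<lambda>args. part_sgn \<rho> *\<^sub>R \<omega> p \<rho> args))"
    using assms(1) unfolding symmetric_nfold_atlas_def by (elim conjE)
  then obtain \<omega> where trans: "chart_transition n M E \<pi> V (U \<alpha>) (\<Theta> \<alpha>) (U \<beta>) (\<Theta> \<beta>) \<omega>"
    and sgn: "\<forall>I\<in>Idx n. \<forall>J\<in>Idx n. \<forall>\<rho>1\<in>canon_partitions I. \<forall>\<rho>2\<in>canon_partitions J.
           map card \<rho>1 = map card \<rho>2 \<longrightarrow>
           (\<forall>p\<in>U \<alpha> \<inter> U \<beta>. \<forall>args. part_sgn \<rho>1 *\<^sub>R \<omega> p \<rho>1 args = part_sgn \<rho>2 *\<^sub>R \<omega> p \<rho>2 args)"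
    and alt: "\<forall>I\<in>Idx n. \<forall>\<rho>\<in>canon_partitions I. \<forall>p\<in>U \<alpha> \<inter> U \<beta>.
           sym_alt V (map card \<rho>) (\<lambda>args. part_sgn \<rho> *\<^sub>R \<omega> p \<rho> args)"
    using assms(2,3) by blast
  show ?thesis
  proof (rule that)
    fix p assume p: "p \<in> U \<alpha> \<inter> U \<beta>"
    have "\<forall>I\<in>Idx n. \<forall>\<rho>\<in>canon_partitions I.
        multilinear_into (map (\<lambda>B. V (card B)) \<rho>) (V (card I)) (\<omega> p \<rho>)"
      using trans p unfolding chart_transition_def by blast
    with sgn alt p show "symmetric_coefficients n V (\<omega> p)"
      unfolding symmetric_coefficients_def by blast
  next
    fix e assume "e \<in> chart_domain E \<pi> (U \<alpha> \<inter> U \<beta>)"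
    then show "\<Theta> \<beta> e = (\<pi> e, transition_fiber n (\<omega> (\<pi> e)) (snd (\<Theta> \<alpha> e)))"
      using trans unfolding chart_transition_def transition_fiber_def by blast
  qed
qed

lemma local_perm_chart_transition:
  assumes atlas: "symmetric_nfold_atlas n M E \<pi> V \<Lambda> U \<Theta>" and \<alpha>: "\<alpha> \<in> \<Lambda>" and \<beta>: "\<beta> \<in> \<Lambda>"
    and \<sigma>: "\<sigma> permutes {1..n}"
    and e: "e \<in> chart_domain E \<pi> (U \<alpha>)" "e \<in> chart_domain E \<pi> (U \<beta>)"
    and e': "e' \<in> chart_domain E \<pi> (U \<alpha>)" "\<Theta> \<alpha> e' = local_perm n \<sigma> (\<Theta> \<alpha> e)"
  shows "e' \<in> chart_domain E \<pi> (U \<beta>) \<and> \<Theta> \<beta> e' = local_perm n \<sigma> (\<Theta> \<beta> e)"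
proof -
  have chart: "nfold_chart n M E \<pi> V (U \<alpha>) (\<Theta> \<alpha>)" and sub: "\<And>k. subspace (V k)"
    using atlas \<alpha> by (auto simp: symmetric_nfold_atlas_def)
  have fst_\<Theta>: "\<And>x. x \<in> chart_domain E \<pi> (U \<alpha>) \<Longrightarrow> fst (\<Theta> \<alpha> x) = \<pi> x"
    using chart by (simp add: nfold_chart_def)
  have "\<pi> e' = \<pi> e" using fst_\<Theta>[OF e'(1)] fst_\<Theta>[OF e(1)] e'(2) by (simp add: local_perm_eq)
  then have e'\<beta>: "e' \<in> chart_domain E \<pi> (U \<beta>)" using e e'(1) by (simp add: chart_domain_def)
  obtain \<omega> where \<omega>: "\<And>p. p \<in> U \<alpha> \<inter> U \<beta> \<Longrightarrow> symmetric_coefficients n V (\<omega> p)"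
    and \<Theta>\<beta>: "\<And>x. x \<in> chart_domain E \<pi> (U \<alpha> \<inter> U \<beta>) \<Longrightarrow>
      \<Theta> \<beta> x = (\<pi> x, transition_fiber n (\<omega> (\<pi> x)) (snd (\<Theta> \<alpha> x)))"
    using symmetric_nfold_atlas_transition[OF atlas \<alpha> \<beta>] by blast
  have "\<Theta> \<alpha> e \<in> chart_range n M V (U \<alpha>)"
    using bij_betw_apply[OF nfold_chart_bij_betw[OF chart] e(1)] .
  then have "snd (\<Theta> \<alpha> e) \<in> PiE (Idx n) (\<lambda>I. V (card I))"
    by (auto simp: chart_range_def)
  then have "transition_fiber n (\<omega> (\<pi> e)) (fiber_perm n \<sigma> (snd (\<Theta> \<alpha> e)))
      = fiber_perm n \<sigma> (transition_fiber n (\<omega> (\<pi> e)) (snd (\<Theta> \<alpha> e)))"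
    using e by (intro transition_fiber_fiber_perm[OF \<sigma> sub _ \<omega>]) (auto simp: chart_domain_def)
  moreover have "e \<in> chart_domain E \<pi> (U \<alpha> \<inter> U \<beta>)" "e' \<in> chart_domain E \<pi> (U \<alpha> \<inter> U \<beta>)"
    using e e'(1) e'\<beta> by (auto simp: chart_domain_def)
  ultimately have "\<Theta> \<beta> e' = local_perm n \<sigma> (\<Theta> \<beta> e)"
    using \<Theta>\<beta> \<open>\<pi> e' = \<pi> e\<close> e'(2) by (simp add: local_perm_eq)
  with e'\<beta> show ?thesis by simp
qed

theorem mainTheorem13:
  fixes n :: nat and M :: "'m topology" and E :: "'e topology" and \<pi> :: "'e \<Rightarrow> 'm"
    and V :: "nat \<Rightarrow> 'v::euclidean_space set" and \<Lambda> :: "'a set" and U :: "'a \<Rightarrow> 'm set"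
    and \<Theta> :: "'a \<Rightarrow> 'e \<Rightarrow> 'm \<times> (nat set \<Rightarrow> 'v)"
  assumes "symmetric_nfold_atlas n M E \<pi> V \<Lambda> U \<Theta>"
  shows "\<exists>\<Phi> :: (nat \<Rightarrow> nat) \<Rightarrow> 'e \<Rightarrow> 'e.
           (\<forall>\<sigma>. \<sigma> permutes {1..n} \<longrightarrow>
              (\<forall>\<alpha>\<in>\<Lambda>. \<forall>e\<in>chart_domain E \<pi> (U \<alpha>).
                 \<Phi> \<sigma> e \<in> chart_domain E \<pi> (U \<alpha>) \<and>
                 \<Theta> \<alpha> (\<Phi> \<sigma> e) = local_perm n \<sigma> (\<Theta> \<alpha> e))) \<and>
           (\<forall>e\<in>topspace E. \<Phi> id e = e) \<and>
           (\<forall>\<sigma> \<tau>. \<sigma> permutes {1..n} \<longrightarrow> \<tau> permutes {1..n} \<longrightarrow>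
              (\<forall>e\<in>topspace E. \<Phi> (\<sigma> \<circ> \<tau>) e = \<Phi> \<sigma> (\<Phi> \<tau> e)))"
proof -
  let ?G = "{\<sigma>. \<sigma> permutes {1..n}}" and ?D = "\<lambda>\<alpha>. chart_domain E \<pi> (U \<alpha>)"
  have cont: "continuous_map E M \<pi>" and sub: "\<And>k. subspace (V k)"
    and cover: "topspace M \<subseteq> (\<Union>\<alpha>\<in>\<Lambda>. U \<alpha>)"
    and bij: "\<And>\<alpha>. \<alpha> \<in> \<Lambda> \<Longrightarrow> bij_betw (\<Theta> \<alpha>) (?D \<alpha>) (chart_range n M V (U \<alpha>))"
    using assms by (auto simp: symmetric_nfold_atlas_def intro: nfold_chart_bij_betw)
  have "\<exists>\<Phi>. (\<forall>\<sigma>\<in>?G. \<forall>\<alpha>\<in>\<Lambda>. \<forall>e\<in>?D \<alpha>. \<Phi> \<sigma> e \<in> ?D \<alpha> \<and> \<Theta> \<alpha> (\<Phi> \<sigma> e) = local_perm n \<sigma> (\<Theta> \<alpha> e)) \<and>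
      (\<forall>e\<in>topspace E. \<Phi> id e = e) \<and>
      (\<forall>\<sigma>\<in>?G. \<forall>\<tau>\<in>?G. \<forall>e\<in>topspace E. \<Phi> (\<sigma> \<circ> \<tau>) e = \<Phi> \<sigma> (\<Phi> \<tau> e))"
  proof (rule glue_local_actions)
    show "\<exists>\<alpha>\<in>\<Lambda>. e \<in> ?D \<alpha>" if "e \<in> topspace E" for e
      using that cover continuous_map_image_subset_topspace[OF cont] by (auto simp: chart_domain_def)
    show "?D \<alpha> \<subseteq> topspace E" for \<alpha>
      by (auto simp: chart_domain_def)
    show "inj_on (\<Theta> \<alpha>) (?D \<alpha>)" if "\<alpha> \<in> \<Lambda>" for \<alpha>
      using bij[OF that] by (rule bij_betw_imp_inj_on)
    show "id \<in> ?G" "\<And>\<sigma> \<tau>. \<sigma> \<in> ?G \<Longrightarrow> \<tau> \<in> ?G \<Longrightarrow> \<sigma> \<circ> \<tau> \<in> ?G"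
      by (simp_all add: permutes_id permutes_compose)
    show "local_perm n \<sigma> x \<in> \<Theta> \<alpha> ` ?D \<alpha>"
      if "\<alpha> \<in> \<Lambda>" "\<sigma> \<in> ?G" "x \<in> \<Theta> \<alpha> ` ?D \<alpha>" for \<alpha> \<sigma> x
      using local_perm_chart_range[of \<sigma> n V x M "U \<alpha>"] that sub bij_betw_imp_surj_on[OF bij[OF that(1)]]
      by auto
    show "local_perm n id x = x" if "\<alpha> \<in> \<Lambda>" "x \<in> \<Theta> \<alpha> ` ?D \<alpha>" for \<alpha> x
      using local_perm_id that bij_betw_imp_surj_on[OF bij[OF that(1)]] by blast
    show "local_perm n (\<sigma> \<circ> \<tau>) x = local_perm n \<sigma> (local_perm n \<tau> x)" if "\<sigma> \<in> ?G" "\<tau> \<in> ?G" for \<sigma> \<tau> x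
      using that by (intro local_perm_comp) simp_all
    show "e' \<in> ?D \<beta> \<and> \<Theta> \<beta> e' = local_perm n \<sigma> (\<Theta> \<beta> e)"
      if "\<alpha> \<in> \<Lambda>" "\<beta> \<in> \<Lambda>" "\<sigma> \<in> ?G" "e \<in> ?D \<alpha>" "e \<in> ?D \<beta>" "e' \<in> ?D \<alpha>"
        "\<Theta> \<alpha> e' = local_perm n \<sigma> (\<Theta> \<alpha> e)" for \<alpha> \<beta> \<sigma> e e'
      using that by (intro local_perm_chart_transition[OF assms]) simp_all
  qed
  then show ?thesis by auto
qed

end
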